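(* Let $(R_n)_{n\in\mathbb Z}$ satisfy the $(1,4)$-system $$R_{2n}CR_{2n-2}=1+R_{2n-1},\qquad R_{2n+1}CR_{2n-1}=1+R_{2n}^4\qquad(n\in\mathbb Z),$$ and set $u_n=R_{2n}$. Then there is an element $K$ such that for all $n\in\mathbb Z$ $$u_{n+2}C-u_{n+1}K+u_n=0\qquad\text{and}\qquad u_{n+2}-Ku_{n+1}+Cu_n=0.$$ The values of $C$ and $K$ in the two cases of initial data are as follows. (a) For the initial data $R_0=yxy^{-1}$, $R_1=y$ (so that $u_0=yxy^{-1}$ and $u_1=(1+y)x^{-1}$), with $x,y$ non-commuting indeterminates and $C=xyx^{-1}y^{-1}$, one has $$K=\big(x^2+((1+y)x^{-1})^2\big)y^{-1}.$$ (b) For the initial data $R_1=YXY^{-1}$, $R_2=Y$, with $X,Y$ non-commuting indeterminates and $C=XYX^{-1}Y^{-1}$, one has $$K=\big(Y^2+((1+X)Y^{-1})^2\big)YX^{-1}Y^{-1}.$$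
   Context: Work in the free skew field (non-commutative rational functions) over $\mathbb C$ generated by the relevant pair of indeterminates. The recursion determines $R_n$ for all $n\in\mathbb Z$ from two consecutive values. *)

theory Defs
  imports Main
begin

definition system14 :: "'a::division_ring \<Rightarrow> (int \<Rightarrow> 'a) \<Rightarrow> bool" where
  "system14 C R \<longleftrightarrow>
     (\<forall>n::int. R (2*n) * C * R (2*n - 2) = 1 + R (2*n - 1) \<and>
               R (2*n + 1) * C * R (2*n - 1) = 1 + R (2*n) ^ 4)"

end

theory Submission
  imports Defs
begin

text \<open>
  Both equations of the system read \<open>R (k+1) * C * R (k-1) = 1 + R k ^ d\<^sub>k\<close>, whose right-hand
  side commutes with \<open>R k\<close>; hence the quasi-commutation \<open>R (k+1) * C * R k = R k * R (k+1)\<close>,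
  once true for one \<open>k\<close>, holds for all \<open>k\<close>. It expresses \<open>C\<close> through two consecutive values, so
  every term of a window \<open>R (2n), \<dots>, R (2n+4)\<close> becomes a Laurent expression in \<open>R (2n+1)\<close> and
  \<open>R (2n+2)\<close>, and in these coordinates a direct computation shows that
  \<open>K\<^sub>n = (R (2n+2)\<^sup>2 + (C * R (2n))\<^sup>2) * inverse (R (2n+1))\<close> is independent of \<open>n\<close> and satisfies
  both linear relations. The initial data of (a) and (b) quasi-commute at \<open>k = 0\<close> resp. \<open>k = 1\<close>,
  and \<open>K\<^sub>0\<close> evaluates to the stated \<open>K\<close>.
\<close>

lemma inverse_mult_cancel:
  fixes x :: "'a::division_ring"
  assumes "x \<noteq> 0"
  shows "x * inverse x = 1" "inverse x * x = 1"
    "x * (inverse x * z) = z" "inverse x * (x * z) = z"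
  using assms by (simp_all add: mult.assoc[symmetric])

lemma system14_step:
  assumes "system14 C R"
  shows "R (k+1) * C * R (k-1) = 1 + R k ^ (if even k then 4 else 1)"
proof (cases "even k")
  case True
  then obtain n where k: "k = 2*n" by blast
  from assms have "R (2*n + 1) * C * R (2*n - 1) = 1 + R (2*n) ^ 4"
    unfolding system14_def by blast
  with True k show ?thesis by simp
next
  case False
  then obtain m where "k = 2*m + 1" by (auto elim: oddE)
  then have k: "k = 2*(m+1) - 1" "k + 1 = 2*(m+1)" "k - 1 = 2*(m+1) - 2" by simp_all
  from assms have "R (2*(m+1)) * C * R (2*(m+1) - 2) = 1 + R (2*(m+1) - 1)"
    unfolding system14_def by blast
  with False k show ?thesis by (simp add: add.commute)
qed

definition quasi_commute :: "'a::ring \<Rightarrow> 'a \<Rightarrow> 'a \<Rightarrow> bool" where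
  "quasi_commute C p q \<longleftrightarrow> q * C * p = p * q"

lemma quasi_commute_forward:
  fixes p q r C D :: "'a::division_ring"
  assumes nz: "p \<noteq> 0" "q \<noteq> 0" and qD: "q * D = D * q"
    and rel: "r * C * p = D" and qc: "quasi_commute C p q"
  shows "quasi_commute C q r"
proof -
  note cancel = inverse_mult_cancel[OF nz(1)] inverse_mult_cancel[OF nz(2)]
  have qD': "q * (D * z) = D * (q * z)" for z using qD by (metis mult.assoc)
  have C: "C = inverse q * p * q * inverse p"
  proof -
    have "C = inverse q * (q * C * p) * inverse p" by (simp add: mult.assoc cancel)
    with qc show ?thesis by (simp add: quasi_commute_def mult.assoc)
  qed
  have "r = (r * C * p) * inverse q * inverse p * q" by (simp add: C mult.assoc cancel)
  with rel have "r = D * inverse q * inverse p * q" by simp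
  then show ?thesis by (simp add: quasi_commute_def C mult.assoc cancel qD')
qed

lemma quasi_commute_backward:
  fixes p q r C D :: "'a::division_ring"
  assumes nz: "q \<noteq> 0" "r \<noteq> 0" and qD: "q * D = D * q"
    and rel: "r * C * p = D" and qc: "quasi_commute C q r"
  shows "quasi_commute C p q"
proof -
  note cancel = inverse_mult_cancel[OF nz(1)] inverse_mult_cancel[OF nz(2)]
  have C: "C = inverse r * q * r * inverse q"
  proof -
    have "C = inverse r * (r * C * q) * inverse q" by (simp add: mult.assoc cancel)
    with qc show ?thesis by (simp add: quasi_commute_def mult.assoc)
  qed
  have "p = q * inverse r * inverse q * (r * C * p)" by (simp add: C mult.assoc cancel)
  with rel have p: "p = q * inverse r * inverse q * D" by simp
  have "inverse q * D = inverse q * (D * q) * inverse q" by (simp add: mult.assoc cancel)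
  also have "\<dots> = D * inverse q" by (simp add: qD[symmetric] mult.assoc cancel)
  finally have "inverse q * (D * z) = D * (inverse q * z)" for z by (metis mult.assoc)
  then show ?thesis by (simp add: quasi_commute_def p C mult.assoc cancel)
qed

lemma system14_quasi_commute:
  assumes sys: "system14 C R" and nz: "\<And>n. R n \<noteq> 0"
    and start: "quasi_commute C (R k\<^sub>0) (R (k\<^sub>0+1))"
  shows "quasi_commute C (R k) (R (k+1))"
proof (induction k rule: int_induct[of _ k\<^sub>0])
  case base
  show ?case using start .
next
  case (step1 i)
  have "R (i+1) * (1 + R (i+1) ^ m) = (1 + R (i+1) ^ m) * R (i+1)" for m
    by (simp add: algebra_simps power_commutes)
  from quasi_commute_forward[OF nz nz this system14_step[OF sys, of "i+1"]] step1(2)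
  show ?case by simp
next
  case (step2 i)
  have "R i * (1 + R i ^ m) = (1 + R i ^ m) * R i" for m
    by (simp add: algebra_simps power_commutes)
  from quasi_commute_backward[OF nz nz this system14_step[OF sys, of i]] step2(2)
  show ?case by simp
qed

definition conserved14 :: "'a::division_ring \<Rightarrow> (int \<Rightarrow> 'a) \<Rightarrow> int \<Rightarrow> 'a" where
  "conserved14 C R n = (R (2*n+2)^2 + (C * R (2*n))^2) * inverse (R (2*n+1))"

text \<open>Here \<open>a, b, c, e, f\<close> stand for \<open>R (2n), \<dots>, R (2n+4)\<close> and \<open>ib, ic\<close> for the inverses of \<open>b, c\<close>.\<close>

lemma window_identities:
  fixes b c ib ic C a e f :: "'a::ring_1"
  assumes b: "b * ib = 1" "ib * b = 1" and c: "c * ic = 1" "ic * c = 1"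
    and C: "C = ic * b * c * ib" and a: "a = b * ic * ib * (1 + b)"
    and e: "e = (1 + c^4) * ic * ib * c" and f: "f = (1 + e) * ic * b * ic * ib * c"
  shows "c * ((c^2 + (C * a)^2) * ib) = f * C + a"
    and "(c^2 + (C * a)^2) * ib * c = f + C * a"
    and "(c^2 + (C * a)^2) * ib * e = f^2 + (C * c)^2"
proof -
  have "b * (ib * z) = z" "ib * (b * z) = z" "c * (ic * z) = z" "ic * (c * z) = z" for z
    using b c by (metis mult.assoc mult_1_left)+
  note expand = this b c C a e f distrib_left distrib_right mult.assoc add.assoc
    power2_eq_square power4_eq_xxxx
  show "c * ((c^2 + (C * a)^2) * ib) = f * C + a" by (simp add: expand)
  show "(c^2 + (C * a)^2) * ib * c = f + C * a" by (simp add: expand)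
  show "(c^2 + (C * a)^2) * ib * e = f^2 + (C * c)^2" by (simp add: expand)
qed

lemma system14_window:
  fixes C :: "'a::division_ring"
  assumes sys: "system14 C R" and nz: "\<And>n. R n \<noteq> 0"
    and qc: "\<And>k. quasi_commute C (R k) (R (k+1))"
  shows "R (2*n+2) * conserved14 C R n = R (2*n+4) * C + R (2*n)"
    and "conserved14 C R n * R (2*n+2) = R (2*n+4) + C * R (2*n)"
    and "conserved14 C R (n+1) = conserved14 C R n"
proof -
  define a b c e f where "a = R (2*n)" and "b = R (2*n+1)" and "c = R (2*n+2)"
    and "e = R (2*n+3)" and "f = R (2*n+4)"
  note abbr = a_def b_def c_def e_def f_def
  have "b \<noteq> 0" "c \<noteq> 0" "e \<noteq> 0" using nz by (simp_all add: abbr)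
  note cancel = inverse_mult_cancel[OF this(1)] inverse_mult_cancel[OF this(2)]
  have idx: "2*n+1+1 = 2*n+2" "2*n+1-1 = 2*n" "2*n+2+1 = 2*n+3" "2*n+2-1 = 2*n+1"
    "2*n+3+1 = 2*n+4" "2*n+3-1 = 2*n+2" by simp_all
  have qc': "c * C * b = b * c"
    using qc[of "2*n+1"] by (simp add: quasi_commute_def abbr idx)
  have s1: "c * C * a = 1 + b"
    using system14_step[OF sys, of "2*n+1", unfolded idx] by (simp add: abbr)
  have s2: "e * C * b = 1 + c^4"
    using system14_step[OF sys, of "2*n+2", unfolded idx] by (simp add: abbr)
  have s3: "f * C * c = 1 + e"
    using system14_step[OF sys, of "2*n+3", unfolded idx] by (simp add: abbr)
  have C: "C = inverse c * b * c * inverse b"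
  proof -
    have "C = inverse c * (c * C * b) * inverse b" by (simp add: mult.assoc cancel)
    then show ?thesis unfolding qc' by (simp add: mult.assoc)
  qed
  have "a = b * inverse c * inverse b * (c * C * a)" by (simp add: C mult.assoc cancel)
  then have a: "a = b * inverse c * inverse b * (1 + b)" unfolding s1 .
  have "e = (e * C * b) * inverse c * inverse b * c" by (simp add: C mult.assoc cancel)
  then have e: "e = (1 + c^4) * inverse c * inverse b * c" unfolding s2 .
  have "f = (f * C * c) * inverse c * b * inverse c * inverse b * c"
    by (simp add: C mult.assoc cancel)
  then have f: "f = (1 + e) * inverse c * b * inverse c * inverse b * c" unfolding s3 .
  note identities = window_identities[OF cancel(1,2,5,6) C a e f]
  have K: "conserved14 C R n = (c^2 + (C * a)^2) * inverse b"
    by (simp add: conserved14_def abbr)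
  have "conserved14 C R (n+1) = (f^2 + (C * c)^2) * inverse e"
    by (simp add: conserved14_def abbr algebra_simps)
  also have "\<dots> = conserved14 C R n * e * inverse e" using identities(3) K by simp
  also have "\<dots> = conserved14 C R n" using \<open>e \<noteq> 0\<close> by (simp add: mult.assoc)
  finally show "conserved14 C R (n+1) = conserved14 C R n" .
  show "R (2*n+2) * conserved14 C R n = R (2*n+4) * C + R (2*n)"
    using identities(1) K by (simp add: abbr mult.assoc)
  show "conserved14 C R n * R (2*n+2) = R (2*n+4) + C * R (2*n)"
    using identities(2) K by (simp add: abbr)
qed

lemma system14_linear_recurrence:
  fixes C :: "'a::division_ring"
  assumes sys: "system14 C R" and nz: "\<And>n. R n \<noteq> 0"
    and start: "quasi_commute C (R k\<^sub>0) (R (k\<^sub>0+1))"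
  shows "R (2*(n+2)) * C - R (2*(n+1)) * conserved14 C R 0 + R (2*n) = 0"
    and "R (2*(n+2)) - conserved14 C R 0 * R (2*(n+1)) + C * R (2*n) = 0"
proof -
  note window = system14_window[OF sys nz system14_quasi_commute[OF sys nz start]]
  have const: "conserved14 C R m = conserved14 C R 0" for m
  proof (induction m rule: int_induct[of _ 0])
    case (step1 i)
    then show ?case using window(3)[of i] by simp
  next
    case (step2 i)
    then show ?case using window(3)[of "i - 1"] by simp
  qed simp
  have "2*(n+2) = 2*n+4" "2*(n+1) = 2*n+2" by simp_all
  with window(1,2)[of n] show
    "R (2*(n+2)) * C - R (2*(n+1)) * conserved14 C R 0 + R (2*n) = 0"
    "R (2*(n+2)) - conserved14 C R 0 * R (2*(n+1)) + C * R (2*n) = 0"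
    unfolding const[of n] by (simp_all add: algebra_simps)
qed

lemma system14_linear_recurrence_R0_R1:
  fixes x y :: "'a::division_ring"
  defines "C \<equiv> x * y * inverse x * inverse y"
    and "K \<equiv> (x^2 + ((1 + y) * inverse x)^2) * inverse y"
  assumes sys: "system14 C R" and nz: "\<And>n. R n \<noteq> 0"
    and R0: "R 0 = y * x * inverse y" and R1: "R 1 = y"
  shows "R (2*(n+2)) * C - R (2*(n+1)) * K + R (2*n) = 0"
    and "R (2*(n+2)) - K * R (2*(n+1)) + C * R (2*n) = 0"
proof -
  have "x \<noteq> 0" "y \<noteq> 0" using nz[of 0] nz[of 1] R0 R1 by auto
  note cancel = inverse_mult_cancel[OF this(1)] inverse_mult_cancel[OF this(2)]
  have start: "quasi_commute C (R 0) (R (0+1))"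
    by (simp add: quasi_commute_def R0 R1 C_def mult.assoc cancel)
  have CR0: "C * R 0 = x" by (simp add: R0 C_def mult.assoc cancel)
  have "R (2*1) * C * R (2*1 - 2) = 1 + R (2*1 - 1)" using sys unfolding system14_def by blast
  then have "R 2 * x = 1 + y" using CR0 R1 by (simp add: mult.assoc)
  then have "R 2 = (1 + y) * inverse x" by (metis cancel(1) mult.assoc mult_1_right)
  with CR0 R1 have "conserved14 C R 0 = K"
    by (simp add: conserved14_def K_def add.commute)
  from system14_linear_recurrence[OF sys nz start, unfolded this]
  show "R (2*(n+2)) * C - R (2*(n+1)) * K + R (2*n) = 0"
    and "R (2*(n+2)) - K * R (2*(n+1)) + C * R (2*n) = 0" .
qed

lemma system14_linear_recurrence_R1_R2:
  fixes X Y :: "'a::division_ring"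
  defines "C \<equiv> X * Y * inverse X * inverse Y"
    and "K \<equiv> (Y^2 + ((1 + X) * inverse Y)^2) * Y * inverse X * inverse Y"
  assumes sys: "system14 C R" and nz: "\<And>n. R n \<noteq> 0"
    and R1: "R 1 = Y * X * inverse Y" and R2: "R 2 = Y"
  shows "R (2*(n+2)) * C - R (2*(n+1)) * K + R (2*n) = 0"
    and "R (2*(n+2)) - K * R (2*(n+1)) + C * R (2*n) = 0"
proof -
  have "X \<noteq> 0" "Y \<noteq> 0" using nz[of 1] nz[of 2] R1 R2 by auto
  note cancel = inverse_mult_cancel[OF this(1)] inverse_mult_cancel[OF this(2)]
  have start: "quasi_commute C (R 1) (R (1+1))"
    by (simp add: quasi_commute_def R1 R2 C_def mult.assoc cancel)
  have "R (2*1) * C * R (2*1 - 2) = 1 + R (2*1 - 1)" using sys unfolding system14_def by blast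
  then have "Y * (C * R 0) = 1 + Y * X * inverse Y" using R1 R2 by (simp add: mult.assoc)
  then have "C * R 0 = inverse Y * (1 + Y * X * inverse Y)" by (metis cancel(8))
  then have CR0: "C * R 0 = (1 + X) * inverse Y"
    by (simp add: distrib_left distrib_right mult.assoc cancel)
  have "inverse (R 1) = Y * inverse X * inverse Y"
    unfolding R1 by (rule inverse_unique) (simp add: mult.assoc cancel)
  with CR0 R2 have "conserved14 C R 0 = K"
    by (simp add: conserved14_def K_def mult.assoc)
  from system14_linear_recurrence[OF sys nz start, unfolded this]
  show "R (2*(n+2)) * C - R (2*(n+1)) * K + R (2*n) = 0"
    and "R (2*(n+2)) - K * R (2*(n+1)) + C * R (2*n) = 0" .
qed

theorem theorem4p2:
  fixes dummy :: "'a::{division_ring, ring_char_0}"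
  shows
  "(\<forall>(x::'a) y (R::int \<Rightarrow> 'a).
      let C = x * y * inverse x * inverse y;
          K = (x^2 + ((1 + y) * inverse x)^2) * inverse y
      in (system14 C R \<and> (\<forall>n. R n \<noteq> 0) \<and>
          R 0 = y * x * inverse y \<and> R 1 = y)
         \<longrightarrow> (\<forall>n::int. R (2*(n+2)) * C - R (2*(n+1)) * K + R (2*n) = 0 \<and>
                         R (2*(n+2)) - K * R (2*(n+1)) + C * R (2*n) = 0))
   \<and>
   (\<forall>(X::'a) Y (R::int \<Rightarrow> 'a).
      let C = X * Y * inverse X * inverse Y;
          K = (Y^2 + ((1 + X) * inverse Y)^2) * Y * inverse X * inverse Y
      in (system14 C R \<and> (\<forall>n. R n \<noteq> 0) \<and>
          R 1 = Y * X * inverse Y \<and> R 2 = Y)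
         \<longrightarrow> (\<forall>n::int. R (2*(n+2)) * C - R (2*(n+1)) * K + R (2*n) = 0 \<and>
                         R (2*(n+2)) - K * R (2*(n+1)) + C * R (2*n) = 0))"
  unfolding Let_def
  by (intro conjI allI impI; elim conjE)
    (blast intro: system14_linear_recurrence_R0_R1 system14_linear_recurrence_R1_R2)+

end
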